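(* For each $y\in\mathbb Y$ such that the Riccati equations with parameter $y$ have a global solution $(\Phi_y,\Psi_y)$, the Volterra integral operator $$\mathcal I_y:C(\mathbb R_+)\to\{h\in C^1(\mathbb R_+):h(0)=0\},\qquad \mathcal I_y(\theta)(\tau)=\int_0^\tau\theta(s)\langle\Psi_y'(\tau-s),e_1\rangle ds,$$ is well defined and bijective.
   Context: $d\ge1$, $e_1$ the first canonical basis vector of $\mathbb R^d$, $\langle\cdot,\cdot\rangle$ the Euclidean inner product. For a parameter $y$ there are symmetric positive semidefinite $a_y,\alpha_y^1,\dots,\alpha_y^d\in\mathbb R^{d\times d}$ and $b_y,\beta_y^1,\dots,\beta_y^d\in\mathbb R^d$. Fix $\lambda\in\mathbb R^d$ with $\langle\lambda,e_1\rangle\ne0$. With $F_y(u)=\tfrac12\langle u,a_yu\rangle+\langle u,b_y\rangle$ and $R_y^i(u)=\tfrac12\langle u,\alpha_y^iu\rangle+\langle u,\beta_y^i\rangle$, the Riccati equations are $\Phi_y'=F_y\circ\Psi_y$, $\Phi_y(0)=0$, $\Psi_y'=R_y\circ\Psi_y-\lambda$, $\Psi_y(0)=0$, with $\Phi_y\in C^\infty(\mathbb R_+)$, $\Psi_y\in C^\infty(\mathbb R_+;\mathbb R^d)$. *)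

theory Defs
  imports "HOL-Analysis.Analysis"
begin

text \<open>First canonical basis vector of real^'n; the index type is well-ordered, its least
  element plays the role of the index 1.\<close>
definition e1 :: "real ^ 'n::{finite,wellorder}" where
  "e1 = axis (LEAST i::'n. True) 1"

definition sym_psd :: "real ^ 'n ^ 'n \<Rightarrow> bool" where
  "sym_psd A \<longleftrightarrow> transpose A = A \<and> (\<forall>u. 0 \<le> u \<bullet> (A *v u))"

definition quad :: "real ^ 'n ^ 'n \<Rightarrow> real ^ 'n \<Rightarrow> real ^ 'n \<Rightarrow> real" where
  "quad A c u = (1/2) * (u \<bullet> (A *v u)) + u \<bullet> c"

definition Rvec :: "('n \<Rightarrow> real ^ 'n ^ 'n) \<Rightarrow> ('n \<Rightarrow> real ^ 'n) \<Rightarrow> real ^ 'n \<Rightarrow> real ^ 'n" where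
  "Rvec \<alpha> \<beta> u = (\<chi> i. quad (\<alpha> i) (\<beta> i) u)"

definition smooth_Rplus :: "(real \<Rightarrow> 'b::real_normed_vector) \<Rightarrow> bool" where
  "smooth_Rplus f \<longleftrightarrow> (\<exists>D::nat \<Rightarrow> real \<Rightarrow> 'b. D 0 = f \<and>
     (\<forall>k. \<forall>t\<ge>0. (D k has_vector_derivative D (Suc k) t) (at t within {0..})))"

definition riccati_solution ::
  "real ^ 'n ^ 'n \<Rightarrow> real ^ 'n \<Rightarrow> ('n \<Rightarrow> real ^ 'n ^ 'n) \<Rightarrow> ('n \<Rightarrow> real ^ 'n) \<Rightarrow> real ^ 'n
   \<Rightarrow> (real \<Rightarrow> real) \<Rightarrow> (real \<Rightarrow> real ^ 'n) \<Rightarrow> bool" where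
  "riccati_solution a b \<alpha> \<beta> lam \<Phi> \<Psi> \<longleftrightarrow>
     smooth_Rplus \<Phi> \<and> smooth_Rplus \<Psi> \<and> \<Phi> 0 = 0 \<and> \<Psi> 0 = 0 \<and>
     (\<forall>t\<ge>0. (\<Phi> has_vector_derivative quad a b (\<Psi> t)) (at t within {0..})) \<and>
     (\<forall>t\<ge>0. (\<Psi> has_vector_derivative (Rvec \<alpha> \<beta> (\<Psi> t) - lam)) (at t within {0..}))"

text \<open>C(R_+), functions represented as real => real vanishing on the negative axis.\<close>
definition C_Rplus :: "(real \<Rightarrow> real) set" where
  "C_Rplus = {\<theta>. continuous_on {0..} \<theta> \<and> (\<forall>t<0. \<theta> t = 0)}"

definition C1_Rplus_0 :: "(real \<Rightarrow> real) set" where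
  "C1_Rplus_0 = {h. (\<exists>h'. continuous_on {0..} h' \<and>
       (\<forall>t\<ge>0. (h has_real_derivative h' t) (at t within {0..}))) \<and>
       h 0 = 0 \<and> (\<forall>t<0. h t = 0)}"

definition volterra_op :: "(real \<Rightarrow> real ^ 'n::{finite,wellorder}) \<Rightarrow> (real \<Rightarrow> real) \<Rightarrow> real \<Rightarrow> real" where
  "volterra_op \<Psi> \<theta> = (\<lambda>\<tau>. if 0 \<le> \<tau> then
      integral {0..\<tau>} (\<lambda>s. \<theta> s * (vector_derivative \<Psi> (at (\<tau> - s) within {0..}) \<bullet> e1))
    else 0)"

end

theory Submission
  imports Defs
begin

text \<open>Put \<open>g(t) = \<langle>\<Psi>'(t), e\<^sub>1\<rangle>\<close>, so that \<open>I(\<theta>)\<close> is the convolution \<open>\<theta> * g\<close> on \<open>[0,\<tau>]\<close> with a smooth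
  kernel, and \<open>g(0) = \<langle>R(\<Psi>(0)) - \<lambda>, e\<^sub>1\<rangle> = -\<langle>\<lambda>, e\<^sub>1\<rangle> \<noteq> 0\<close>. Since \<open>(\<theta> * g)' = g(0) \<theta> + \<theta> * g'\<close>,
  the equation \<open>I(\<theta>) = h\<close> with \<open>h(0) = 0\<close> is equivalent to the Volterra equation of the second kind
  \<open>\<theta> = h'/g(0) - \<theta> * (g'/g(0))\<close>. A kernel bounded by \<open>B\<close> on \<open>[0,T]\<close> makes the \<open>n\<close>-th iterated
  convolution of a function bounded by \<open>A\<close> at most \<open>A (B s)\<^sup>n / n!\<close>; hence the Neumann series
  converges locally uniformly to a solution, and the homogeneous equation only has the zero
  solution.\<close>

lemma has_real_derivative_integral_from_0:
  fixes f :: "real \<Rightarrow> real"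
  assumes "continuous_on {0..} f" "x \<ge> 0"
  shows "((\<lambda>y. integral {0..y} f) has_real_derivative f x) (at x within {0..})"
proof -
  have "continuous_on {0..x+1} f" using assms(1) by (rule continuous_on_subset) auto
  with assms(2) have "((\<lambda>y. integral {0..y} f) has_real_derivative f x) (at x within {0..x+1})"
    using integral_has_real_derivative by simp
  moreover have "at x within {0..x+1} = at x within {0..}"
    by (rule at_within_nhd[of _ "{..<x+1}"]) auto
  ultimately show ?thesis by simp
qed

lemma has_real_derivative_integral_diagonal:
  fixes F Fx :: "real \<Rightarrow> real \<Rightarrow> real"
  assumes Fx: "\<And>x t. t \<ge> 0 \<Longrightarrow> ((\<lambda>x. F x t) has_real_derivative Fx x t) (at x)"
    and cont_F: "continuous_on (UNIV \<times> {0..}) (\<lambda>(x, t). F x t)"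
    and cont_Fx: "continuous_on (UNIV \<times> {0..}) (\<lambda>(x, t). Fx x t)"
    and \<tau>: "\<tau> \<ge> 0"
  shows "((\<lambda>t. integral {0..t} (F t)) has_real_derivative F \<tau> \<tau> + integral {0..\<tau>} (Fx \<tau>))
           (at \<tau> within {0..})"
proof -
  note [continuous_intros] =
    continuous_on_compose2[OF cont_F, where f="\<lambda>y. Pair x y" for x, unfolded split_beta fst_conv snd_conv]
  have cont_F_x: "continuous_on {0..} (F x)" for x
    by (auto intro!: continuous_intros)
  have partial_x: "((\<lambda>x. integral {0..\<tau>} (F x)) has_real_derivative integral {0..\<tau>} (Fx \<tau>)) (at \<tau>)"
  proof (rule leibniz_rule_field_derivative[of UNIV 0 \<tau> F Fx, simplified])
    show "continuous_on (UNIV \<times> {0..\<tau>}) (\<lambda>(x, t). Fx x t)"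
      by (rule continuous_on_subset[OF cont_Fx]) auto
    show "F x integrable_on {0..\<tau>}" for x
      by (rule integrable_continuous_interval, rule continuous_on_subset[OF cont_F_x]) auto
  qed (use Fx in auto)
  have partial_y: "((\<lambda>y. integral {0..y} (F x)) has_derivative blinfun_apply (blinfun_mult_right (F x y)))
      (at y within {0..})" if "y \<in> {0..}" for x y
    using has_real_derivative_integral_from_0[OF cont_F_x, of y x] that
    by (simp add: has_field_derivative_eq_has_derivative_blinfun)
  have "continuous (at (\<tau>, \<tau>) within UNIV \<times> {0..}) (\<lambda>(x, y). F x y)"
    using cont_F \<tau> by (simp add: continuous_on_eq_continuous_within)
  then have cont_partial_y: "continuous (at (\<tau>, \<tau>) within UNIV \<times> {0..}) (\<lambda>(x, y). blinfun_mult_right (F x y))"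
    unfolding case_prod_unfold by (rule bounded_linear.continuous[OF bounded_linear_blinfun_mult_right])
  have joint: "((\<lambda>(x, y). integral {0..y} (F x)) has_derivative
      (\<lambda>(hx, hy). integral {0..\<tau>} (Fx \<tau>) * hx + F \<tau> \<tau> * hy)) (at (\<tau>, \<tau>) within UNIV \<times> {0..})"
    using has_derivative_partialsI[OF has_derivative_subset[OF partial_x[unfolded has_field_derivative_def]]
        partial_y cont_partial_y] \<tau>
    by simp
  have diagonal: "((\<lambda>t. (t, t)) has_derivative (\<lambda>h. (h, h))) (at \<tau> within {0..})"
    by (auto intro!: derivative_eq_intros)
  have "((\<lambda>t. integral {0..t} (F t)) has_derivative
      (\<lambda>h. integral {0..\<tau>} (Fx \<tau>) * h + F \<tau> \<tau> * h)) (at \<tau> within {0..})"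
    using has_derivative_in_compose[OF diagonal has_derivative_subset[OF joint]] by auto
  then show ?thesis
    unfolding has_field_derivative_def by (rule has_derivative_eq_rhs) (auto simp: algebra_simps)
qed

lemma has_real_derivative_linear_extension:
  fixes g g' :: "real \<Rightarrow> real"
  assumes g: "\<And>t. t \<ge> 0 \<Longrightarrow> (g has_real_derivative g' t) (at t within {0..})"
  shows "((\<lambda>x. if x \<in> {0..} then g x else g 0 + g' 0 * x) has_real_derivative g' (max x 0)) (at x)"
proof -
  have closures: "closure {0::real..} = {0..}" "closure {..<0::real} = {..0}" by simp_all
  have "((\<lambda>x. if x \<in> {0..} then g x else g 0 + g' 0 * x) has_derivative
      (if x \<in> {0..} then (*) (g' x) else (*) (g' 0))) (at x within ({0..} \<union> {..<0}))"
  proof (rule has_derivative_If_within_closures)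
    assume "x \<in> {0..} \<union> (closure {0..} \<inter> closure {..<0})"
    moreover have "{0..} \<union> (closure {0..} \<inter> closure {..<0}) = {0::real..}"
      by (auto simp: closures)
    ultimately show "(g has_derivative (*) (g' x)) (at x within {0..} \<union> (closure {0..} \<inter> closure {..<0}))"
      using g[of x] by (simp add: has_field_derivative_def)
  qed (auto intro!: derivative_eq_intros simp: closures)
  moreover have "(if x \<in> {0..} then (*) (g' x) else (*) (g' 0)) = (*) (g' (max x 0))"
    by (auto simp: max_def)
  moreover have "{0::real..} \<union> {..<0} = UNIV" by auto
  ultimately show ?thesis by (simp add: has_field_derivative_def)
qed

definition volterra_conv :: "(real \<Rightarrow> real) \<Rightarrow> (real \<Rightarrow> real) \<Rightarrow> real \<Rightarrow> real" where
  "volterra_conv k u \<tau> = integral {0..\<tau>} (\<lambda>s. u s * k (\<tau> - s))"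

lemma continuous_on_volterra_integrand:
  fixes k u :: "real \<Rightarrow> real"
  assumes "continuous_on {0..} k" "continuous_on {0..} u"
  shows "continuous_on {0..\<tau>} (\<lambda>s. u s * k (\<tau> - s))"
  by (intro continuous_intros continuous_on_subset[OF assms(2)] continuous_on_compose2[OF assms(1)]) auto

lemma volterra_conv_has_real_derivative:
  fixes g g' \<theta> :: "real \<Rightarrow> real"
  assumes g: "\<And>t. t \<ge> 0 \<Longrightarrow> (g has_real_derivative g' t) (at t within {0..})"
    and cont_g': "continuous_on {0..} g'" and cont_\<theta>: "continuous_on {0..} \<theta>" and \<tau>: "\<tau> \<ge> 0"
  shows "(volterra_conv g \<theta> has_real_derivative \<theta> \<tau> * g 0 + volterra_conv g' \<theta> \<tau>) (at \<tau> within {0..})"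
proof -
  txt \<open>Extending \<open>g\<close> to a \<open>C\<^sup>1\<close> function on \<open>\<real>\<close> lets the Leibniz rule differentiate in \<open>\<tau>\<close>
    on an open set.\<close>
  define G where "G = (\<lambda>x. if x \<in> {0..} then g x else g 0 + g' 0 * x)"
  define G' where "G' = (\<lambda>x::real. g' (max x 0))"
  have G: "(G has_real_derivative G' x) (at x)" for x
    unfolding G_def G'_def by (rule has_real_derivative_linear_extension[OF g])
  have cont_G: "continuous_on UNIV G"
    using G by (meson DERIV_isCont continuous_at_imp_continuous_on)
  have cont_G': "continuous_on UNIV G'"
    unfolding G'_def by (rule continuous_on_compose2[OF cont_g']) (auto intro!: continuous_intros)
  have cont_\<theta>_snd: "continuous_on (UNIV \<times> {0..}) (\<lambda>p. \<theta> (snd p))"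
    by (rule continuous_on_compose2[OF cont_\<theta>]) (auto intro!: continuous_intros)
  have "((\<lambda>t. integral {0..t} (\<lambda>s. \<theta> s * G (t - s))) has_real_derivative
      \<theta> \<tau> * G 0 + integral {0..\<tau>} (\<lambda>s. \<theta> s * G' (\<tau> - s))) (at \<tau> within {0..})"
  proof (rule has_real_derivative_integral_diagonal[where F="\<lambda>x s. \<theta> s * G (x - s)", simplified])
    fix x t :: real
    have "((\<lambda>x. G (x - t)) has_real_derivative G' (x - t) * 1) (at x)"
      by (rule DERIV_chain2[OF G]) (auto intro!: derivative_eq_intros)
    then show "((\<lambda>x. \<theta> t * G (x - t)) has_real_derivative \<theta> t * G' (x - t)) (at x)"
      using DERIV_cmult by fastforce
  next
    have "continuous_on (UNIV \<times> {0..}) (\<lambda>p. \<theta> (snd p) * G (fst p - snd p))"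
      by (intro continuous_intros cont_\<theta>_snd continuous_on_compose2[OF cont_G]) auto
    then show "continuous_on (UNIV \<times> {0..}) (\<lambda>(x, s). \<theta> s * G (x - s))"
      by (simp add: case_prod_unfold)
  next
    have "continuous_on (UNIV \<times> {0..}) (\<lambda>p. \<theta> (snd p) * G' (fst p - snd p))"
      by (intro continuous_intros cont_\<theta>_snd continuous_on_compose2[OF cont_G']) auto
    then show "continuous_on (UNIV \<times> {0..}) (\<lambda>(x, s). \<theta> s * G' (x - s))"
      by (simp add: case_prod_unfold)
  qed (fact \<tau>)
  moreover have "\<theta> \<tau> * G 0 + integral {0..\<tau>} (\<lambda>s. \<theta> s * G' (\<tau> - s)) = \<theta> \<tau> * g 0 + volterra_conv g' \<theta> \<tau>"
    unfolding G_def G'_def volterra_conv_def by (auto intro!: integral_cong)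
  ultimately have "((\<lambda>t. integral {0..t} (\<lambda>s. \<theta> s * G (t - s))) has_real_derivative
      \<theta> \<tau> * g 0 + volterra_conv g' \<theta> \<tau>) (at \<tau> within {0..})"
    by simp
  then show ?thesis
    by (rule has_field_derivative_transform_within[OF _ zero_less_one])
       (use \<tau> in \<open>auto simp: volterra_conv_def G_def intro!: integral_cong\<close>)
qed

text \<open>Continuity holds for merely continuous kernels; for \<open>C\<^sup>1\<close> kernels, which suffice here,
  it is immediate from the derivative formula.\<close>
lemma continuous_on_volterra_conv:
  fixes k k' u :: "real \<Rightarrow> real"
  assumes "\<And>t. t \<ge> 0 \<Longrightarrow> (k has_real_derivative k' t) (at t within {0..})"
    and "continuous_on {0..} k'" "continuous_on {0..} u"
  shows "continuous_on {0..} (volterra_conv k u)"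
  using volterra_conv_has_real_derivative[OF assms] by (intro DERIV_continuous_on) auto

lemma continuous_on_atLeast_abs_bounded:
  fixes f :: "real \<Rightarrow> real"
  assumes "continuous_on {0..} f"
  obtains M where "M \<ge> 0" "\<And>s. s \<in> {0..T} \<Longrightarrow> \<bar>f s\<bar> \<le> M"
proof -
  have "continuous_on {0..T} f" using assms by (rule continuous_on_subset) auto
  then have "bounded (f ` {0..T})" by (intro compact_imp_bounded compact_continuous_image) auto
  then obtain M where "M > 0" "\<forall>x\<in>f ` {0..T}. norm x \<le> M" by (auto simp: bounded_pos)
  then show ?thesis using that[of M] by auto
qed

lemma abs_volterra_conv_le:
  fixes u k :: "real \<Rightarrow> real"
  assumes cont_u: "continuous_on {0..} u" and cont_k: "continuous_on {0..} k"
    and u: "\<And>s. s \<in> {0..\<tau>} \<Longrightarrow> \<bar>u s\<bar> \<le> A * (B * s)^n / fact n"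
    and k: "\<And>s. s \<in> {0..\<tau>} \<Longrightarrow> \<bar>k s\<bar> \<le> B" and \<tau>: "0 \<le> \<tau>"
  shows "\<bar>volterra_conv k u \<tau>\<bar> \<le> A * (B * \<tau>)^Suc n / fact (Suc n)"
proof -
  define F where "F = (\<lambda>s::real. A * (B * s)^Suc n / fact (Suc n))"
  have F: "(F has_real_derivative A * B * (B * s)^n / fact n) (at s)" for s
  proof -
    have "((\<lambda>s. A / fact (Suc n) * (B * s)^Suc n) has_real_derivative
        A / fact (Suc n) * (of_nat (Suc n) * (B * (B * s)^(Suc n - Suc 0)))) (at s)"
      by (intro DERIV_cmult DERIV_power) (auto intro!: derivative_eq_intros)
    moreover have "A / fact (Suc n) * (of_nat (Suc n) * (B * (B * s)^(Suc n - Suc 0))) = A * B * (B * s)^n / fact n"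
      by (simp add: fact_Suc field_simps del: of_nat_Suc)
    ultimately show ?thesis by (simp add: F_def mult.assoc)
  qed
  have majorant: "((\<lambda>s. A * B * (B * s)^n / fact n) has_integral F \<tau> - F 0) {0..\<tau>}"
    by (rule fundamental_theorem_of_calculus)
       (use \<tau> F in \<open>auto simp: has_real_derivative_iff_has_vector_derivative intro: has_vector_derivative_at_within\<close>)
  have "\<bar>volterra_conv k u \<tau>\<bar> \<le> integral {0..\<tau>} (\<lambda>s. A * B * (B * s)^n / fact n)"
    unfolding volterra_conv_def real_norm_def[symmetric]
  proof (rule integral_norm_bound_integral)
    show "(\<lambda>s. u s * k (\<tau> - s)) integrable_on {0..\<tau>}"
      by (rule integrable_continuous_interval[OF continuous_on_volterra_integrand[OF cont_k cont_u]])
    show "(\<lambda>s. A * B * (B * s)^n / fact n) integrable_on {0..\<tau>}" using majorant by blast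
    fix s assume s: "s \<in> {0..\<tau>}"
    have "\<bar>u s\<bar> \<le> A * (B * s)^n / fact n" using u s by blast
    moreover have "\<bar>k (\<tau> - s)\<bar> \<le> B" using k s by auto
    ultimately have "\<bar>u s\<bar> * \<bar>k (\<tau> - s)\<bar> \<le> A * (B * s)^n / fact n * B"
      by (intro mult_mono) auto
    then show "norm (u s * k (\<tau> - s)) \<le> A * B * (B * s)^n / fact n"
      by (simp add: abs_mult field_simps)
  qed
  also have "\<dots> = A * (B * \<tau>)^Suc n / fact (Suc n)"
    using integral_unique[OF majorant] by (simp add: F_def)
  finally show ?thesis .
qed

lemma volterra_iterates_abs_le:
  fixes k :: "real \<Rightarrow> real" and u :: "nat \<Rightarrow> real \<Rightarrow> real"
  assumes cont_k: "continuous_on {0..} k" and cont_u: "\<And>n. continuous_on {0..} (u n)"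
    and u0: "\<And>s. s \<in> {0..T} \<Longrightarrow> \<bar>u 0 s\<bar> \<le> A"
    and k: "\<And>s. s \<in> {0..T} \<Longrightarrow> \<bar>k s\<bar> \<le> B"
    and step: "\<And>n s. s \<in> {0..T} \<Longrightarrow> \<bar>u (Suc n) s\<bar> \<le> \<bar>volterra_conv k (u n) s\<bar>"
    and s: "s \<in> {0..T}"
  shows "\<bar>u n s\<bar> \<le> A * (B * s)^n / fact n"
  using s
proof (induction n arbitrary: s)
  case 0
  then show ?case using u0 by simp
next
  case (Suc n)
  have "\<bar>u (Suc n) s\<bar> \<le> \<bar>volterra_conv k (u n) s\<bar>" using step Suc.prems .
  also have "\<dots> \<le> A * (B * s)^Suc n / fact (Suc n)"
    by (rule abs_volterra_conv_le[OF cont_u cont_k]) (use Suc k in auto)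
  finally show ?case .
qed

lemma exp_series_term_tendsto_0: "(\<lambda>n. A * (x^n / fact n)) \<longlonglongrightarrow> (0::real)"
proof -
  have "(\<lambda>n. x^n /\<^sub>R fact n) \<longlonglongrightarrow> 0"
    by (rule summable_LIMSEQ_zero[OF summable_exp_generic])
  then show ?thesis
    using tendsto_mult_left[of _ 0 _ A] by (simp add: divide_inverse_commute)
qed

lemma volterra_homogeneous_eq_0:
  fixes k u :: "real \<Rightarrow> real"
  assumes cont_k: "continuous_on {0..} k" and cont_u: "continuous_on {0..} u"
    and eq: "\<And>\<tau>. \<tau> \<ge> 0 \<Longrightarrow> u \<tau> = - volterra_conv k u \<tau>"
    and \<tau>: "\<tau> \<ge> 0"
  shows "u \<tau> = 0"
proof -
  obtain A where A: "\<And>s. s \<in> {0..\<tau>} \<Longrightarrow> \<bar>u s\<bar> \<le> A"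
    using continuous_on_atLeast_abs_bounded[OF cont_u] by blast
  obtain B where B: "\<And>s. s \<in> {0..\<tau>} \<Longrightarrow> \<bar>k s\<bar> \<le> B"
    using continuous_on_atLeast_abs_bounded[OF cont_k] by blast
  have "\<bar>u \<tau>\<bar> \<le> A * ((B * \<tau>)^n / fact n)" for n
    using volterra_iterates_abs_le[of k "\<lambda>_. u", OF cont_k cont_u A B] eq \<tau> by auto
  then have "\<bar>u \<tau>\<bar> \<le> 0"
    by (intro tendsto_lowerbound[OF exp_series_term_tendsto_0 always_eventually]) auto
  then show ?thesis by simp
qed

definition neumann_term :: "(real \<Rightarrow> real) \<Rightarrow> (real \<Rightarrow> real) \<Rightarrow> nat \<Rightarrow> real \<Rightarrow> real" where
  "neumann_term k f n = ((\<lambda>u \<tau>. - volterra_conv k u \<tau>) ^^ n) f"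

lemma neumann_term_0 [simp]: "neumann_term k f 0 = f"
  by (simp add: neumann_term_def)

lemma neumann_term_Suc [simp]:
  "neumann_term k f (Suc n) = (\<lambda>\<tau>. - volterra_conv k (neumann_term k f n) \<tau>)"
  by (simp add: neumann_term_def)

context
  fixes k k' f :: "real \<Rightarrow> real"
  assumes k: "\<And>t. t \<ge> 0 \<Longrightarrow> (k has_real_derivative k' t) (at t within {0..})"
    and cont_k': "continuous_on {0..} k'" and cont_f: "continuous_on {0..} f"
begin

lemma continuous_on_neumann_term: "continuous_on {0..} (neumann_term k f n)"
  by (induction n) (auto intro!: continuous_intros continuous_on_volterra_conv[OF k cont_k'] cont_f)

lemma uniform_limit_neumann_series:
  "uniform_limit {0..T} (\<lambda>n x. \<Sum>i<n. neumann_term k f i x) (\<lambda>x. \<Sum>i. neumann_term k f i x) sequentially"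
proof -
  have cont_k: "continuous_on {0..} k"
    using k by (intro DERIV_continuous_on) auto
  obtain A where A: "A \<ge> 0" "\<And>s. s \<in> {0..T} \<Longrightarrow> \<bar>f s\<bar> \<le> A"
    using continuous_on_atLeast_abs_bounded[OF cont_f] by blast
  obtain B where B: "B \<ge> 0" "\<And>s. s \<in> {0..T} \<Longrightarrow> \<bar>k s\<bar> \<le> B"
    using continuous_on_atLeast_abs_bounded[OF cont_k] by blast
  show ?thesis
  proof (rule Weierstrass_m_test[where M="\<lambda>n. A * ((B * T)^n / fact n)"])
    fix n s assume s: "s \<in> {0..T}"
    have "\<bar>neumann_term k f n s\<bar> \<le> A * (B * s)^n / fact n"
      by (rule volterra_iterates_abs_le[OF cont_k continuous_on_neumann_term _ B(2) _ s]) (use A in auto)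
    also have "\<dots> \<le> A * ((B * T)^n / fact n)"
      using s A B by (auto intro!: mult_left_mono divide_right_mono power_mono)
    finally show "norm (neumann_term k f n s) \<le> A * ((B * T)^n / fact n)" by simp
  next
    show "summable (\<lambda>n. A * ((B * T)^n / fact n))"
      using summable_mult[OF summable_exp_generic[of "B * T"], of A] by (simp add: divide_inverse_commute)
  qed
qed

lemma volterra_equation_solvable:
  obtains \<theta> where "continuous_on {0..} \<theta>" "\<And>\<tau>. \<tau> \<ge> 0 \<Longrightarrow> \<theta> \<tau> = f \<tau> - volterra_conv k \<theta> \<tau>"
proof
  define S where "S = (\<lambda>n x. \<Sum>i<n. neumann_term k f i x)"
  define \<theta> where "\<theta> = (\<lambda>x. \<Sum>i. neumann_term k f i x)"
  have cont_k: "continuous_on {0..} k"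
    using k by (intro DERIV_continuous_on) auto
  have cont_S: "continuous_on {0..} (S n)" for n
    unfolding S_def by (intro continuous_intros continuous_on_neumann_term)
  have unif: "uniform_limit {0..T} S \<theta> sequentially" for T
    unfolding S_def \<theta>_def by (rule uniform_limit_neumann_series)
  show cont_\<theta>: "continuous_on {0..} \<theta>"
    unfolding continuous_on_eq_continuous_within
  proof
    fix x :: real assume x: "x \<in> {0..}"
    have "continuous_on {0..x+1} \<theta>"
      by (rule uniform_limit_theorem[OF _ unif])
         (auto intro!: always_eventually continuous_on_subset[OF cont_S])
    then have "continuous (at x within {0..x+1}) \<theta>"
      using x by (simp add: continuous_on_eq_continuous_within)
    moreover have "at x within {0..x+1} = at x within {0..}"
      by (rule at_within_nhd[of _ "{..<x+1}"]) auto
    ultimately show "continuous (at x within {0..}) \<theta>" by simp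
  qed
  fix \<tau> :: real assume \<tau>: "\<tau> \<ge> 0"
  have S_Suc: "S (Suc n) \<tau> = f \<tau> - volterra_conv k (S n) \<tau>" for n
  proof -
    have "S (Suc n) \<tau> = f \<tau> - (\<Sum>i<n. volterra_conv k (neumann_term k f i) \<tau>)"
      unfolding S_def sum.lessThan_Suc_shift by (simp add: sum_negf)
    also have "(\<Sum>i<n. volterra_conv k (neumann_term k f i) \<tau>) = volterra_conv k (S n) \<tau>"
      unfolding volterra_conv_def S_def sum_distrib_right
      by (rule integral_sum[symmetric])
         (auto intro!: integrable_continuous_interval continuous_on_volterra_integrand[OF cont_k]
           continuous_on_neumann_term)
    finally show ?thesis .
  qed
  have "uniform_limit {0..\<tau>} (\<lambda>n s. S n s * k (\<tau> - s)) (\<lambda>s. \<theta> s * k (\<tau> - s)) sequentially"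
  proof (rule uniform_lim_mult[OF unif uniform_limit_const])
    show "bounded (\<theta> ` {0..\<tau>})"
      by (intro compact_imp_bounded compact_continuous_image continuous_on_subset[OF cont_\<theta>]) auto
    show "bounded ((\<lambda>s. k (\<tau> - s)) ` {0..\<tau>})"
      by (intro compact_imp_bounded compact_continuous_image continuous_on_compose2[OF cont_k])
         (auto intro!: continuous_intros)
  qed
  then obtain I J where I: "\<And>n. ((\<lambda>s. S n s * k (\<tau> - s)) has_integral I n) {0..\<tau>}"
    and J: "((\<lambda>s. \<theta> s * k (\<tau> - s)) has_integral J) {0..\<tau>}" and "I \<longlonglongrightarrow> J"
    by (rule uniform_limit_integral)
       (auto intro!: continuous_on_volterra_integrand[OF cont_k cont_S] integrable_continuous_interval)
  then have "(\<lambda>n. volterra_conv k (S n) \<tau>) \<longlonglongrightarrow> volterra_conv k \<theta> \<tau>"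
    unfolding volterra_conv_def using integral_unique[OF I] integral_unique[OF J] by simp
  then have "(\<lambda>n. S (Suc n) \<tau>) \<longlonglongrightarrow> f \<tau> - volterra_conv k \<theta> \<tau>"
    unfolding S_Suc by (intro tendsto_intros)
  moreover have "(\<lambda>n. S (Suc n) \<tau>) \<longlonglongrightarrow> \<theta> \<tau>"
    using tendsto_uniform_limitI[OF unif[of \<tau>], of \<tau>] \<tau> LIMSEQ_Suc by auto
  ultimately show "\<theta> \<tau> = f \<tau> - volterra_conv k \<theta> \<tau>"
    by (rule LIMSEQ_unique[rotated])
qed

end

lemma at_within_atLeast_neq_bot: "a \<le> t \<Longrightarrow> at t within {a::real..} \<noteq> bot"
  using islimpt_subset[of t "{a..t+1}" "{a..}"] by (auto simp: trivial_limit_within)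

lemma volterra_conv_diff:
  fixes k u v :: "real \<Rightarrow> real"
  assumes "continuous_on {0..} k" "continuous_on {0..} u" "continuous_on {0..} v"
  shows "volterra_conv k (\<lambda>s. u s - v s) \<tau> = volterra_conv k u \<tau> - volterra_conv k v \<tau>"
  unfolding volterra_conv_def left_diff_distrib
  by (intro integral_diff integrable_continuous_interval continuous_on_volterra_integrand assms)

lemma volterra_conv_divide_kernel: "volterra_conv (\<lambda>t. k t / c) u \<tau> = volterra_conv k u \<tau> / c"
  unfolding volterra_conv_def by (simp only: times_divide_eq_right integral_divide)

definition volterra_conv_Rplus :: "(real \<Rightarrow> real) \<Rightarrow> (real \<Rightarrow> real) \<Rightarrow> real \<Rightarrow> real" where
  "volterra_conv_Rplus g \<theta> \<tau> = (if 0 \<le> \<tau> then volterra_conv g \<theta> \<tau> else 0)"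

context
  fixes g g' g'' :: "real \<Rightarrow> real"
  assumes g: "\<And>t. t \<ge> 0 \<Longrightarrow> (g has_real_derivative g' t) (at t within {0..})"
    and g': "\<And>t. t \<ge> 0 \<Longrightarrow> (g' has_real_derivative g'' t) (at t within {0..})"
    and cont_g'': "continuous_on {0..} g''"
    and g0: "g 0 \<noteq> 0"
begin

private lemma continuous_on_g': "continuous_on {0..} g'"
  using g' by (intro DERIV_continuous_on) auto

lemma volterra_conv_Rplus_has_real_derivative:
  assumes "continuous_on {0..} \<theta>" "\<tau> \<ge> 0"
  shows "(volterra_conv_Rplus g \<theta> has_real_derivative \<theta> \<tau> * g 0 + volterra_conv g' \<theta> \<tau>)
           (at \<tau> within {0..})"
  by (rule has_field_derivative_transform_within[OF
        volterra_conv_has_real_derivative[OF g continuous_on_g' assms] zero_less_one])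
     (use assms in \<open>auto simp: volterra_conv_Rplus_def\<close>)

lemma volterra_conv_Rplus_in_C1_Rplus_0:
  assumes "\<theta> \<in> C_Rplus"
  shows "volterra_conv_Rplus g \<theta> \<in> C1_Rplus_0"
proof -
  have cont_\<theta>: "continuous_on {0..} \<theta>" using assms by (simp add: C_Rplus_def)
  have "continuous_on {0..} (\<lambda>\<tau>. \<theta> \<tau> * g 0 + volterra_conv g' \<theta> \<tau>)"
    by (intro continuous_intros cont_\<theta> continuous_on_volterra_conv[OF g' cont_g''])
  then show ?thesis
    unfolding C1_Rplus_0_def
    using volterra_conv_Rplus_has_real_derivative[OF cont_\<theta>]
    by (auto simp: volterra_conv_Rplus_def volterra_conv_def)
qed

lemma inj_on_volterra_conv_Rplus: "inj_on (volterra_conv_Rplus g) C_Rplus"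
proof (rule inj_onI)
  fix \<theta>1 \<theta>2 assume "\<theta>1 \<in> C_Rplus" "\<theta>2 \<in> C_Rplus"
    and eq: "volterra_conv_Rplus g \<theta>1 = volterra_conv_Rplus g \<theta>2"
  then have cont: "continuous_on {0..} \<theta>1" "continuous_on {0..} \<theta>2"
    and neg: "\<And>t. t < 0 \<Longrightarrow> \<theta>1 t = 0 \<and> \<theta>2 t = 0"
    by (auto simp: C_Rplus_def)
  define \<delta> where "\<delta> = (\<lambda>s. \<theta>1 s - \<theta>2 s)"
  have cont_\<delta>: "continuous_on {0..} \<delta>" unfolding \<delta>_def by (intro continuous_intros cont)
  have homogeneous: "\<delta> \<tau> = - volterra_conv (\<lambda>t. g' t / g 0) \<delta> \<tau>" if \<tau>: "\<tau> \<ge> 0" for \<tau>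
  proof -
    have "\<theta>1 \<tau> * g 0 + volterra_conv g' \<theta>1 \<tau> = \<theta>2 \<tau> * g 0 + volterra_conv g' \<theta>2 \<tau>"
      using volterra_conv_Rplus_has_real_derivative[OF cont(1) \<tau>]
        volterra_conv_Rplus_has_real_derivative[OF cont(2) \<tau>]
      by (intro has_field_derivative_unique[OF _ _ at_within_atLeast_neq_bot[OF \<tau>]]) (simp_all add: eq)
    then show ?thesis
      using g0 by (simp add: volterra_conv_divide_kernel volterra_conv_diff[OF continuous_on_g' cont]
          \<delta>_def field_simps)
  qed
  have "\<delta> \<tau> = 0" if "\<tau> \<ge> 0" for \<tau>
    by (rule volterra_homogeneous_eq_0[OF _ cont_\<delta> homogeneous that])
       (use g0 in \<open>auto intro!: continuous_intros continuous_on_g'\<close>)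
  then show "\<theta>1 = \<theta>2"
    using neg by (metis \<delta>_def eq_iff_diff_eq_0 ext linorder_not_le)
qed

lemma volterra_conv_Rplus_surj: "C1_Rplus_0 \<subseteq> volterra_conv_Rplus g ` C_Rplus"
proof
  fix h assume "h \<in> C1_Rplus_0"
  then obtain h' where cont_h': "continuous_on {0..} h'"
    and h: "\<And>t. t \<ge> 0 \<Longrightarrow> (h has_real_derivative h' t) (at t within {0..})"
    and h0: "h 0 = 0" and h_neg: "\<And>t. t < 0 \<Longrightarrow> h t = 0"
    unfolding C1_Rplus_0_def by auto
  text \<open>Differentiating \<open>volterra_conv g \<theta> = h\<close> gives a Volterra equation of the second kind,
    because \<open>g 0 \<noteq> 0\<close>.\<close>
  obtain \<theta>0 where cont_\<theta>0: "continuous_on {0..} \<theta>0"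
    and \<theta>0: "\<And>\<tau>. \<tau> \<ge> 0 \<Longrightarrow> \<theta>0 \<tau> = h' \<tau> / g 0 - volterra_conv (\<lambda>t. g' t / g 0) \<theta>0 \<tau>"
    by (rule volterra_equation_solvable[of "\<lambda>t. g' t / g 0" "\<lambda>t. g'' t / g 0" "\<lambda>t. h' t / g 0"])
       (use g0 in \<open>auto intro!: DERIV_cdivide g' continuous_intros cont_g'' cont_h'\<close>)
  define \<theta> where "\<theta> t = (if t \<ge> 0 then \<theta>0 t else 0)" for t
  have cont_\<theta>: "continuous_on {0..} \<theta>"
    using cont_\<theta>0 by (rule continuous_on_eq) (simp add: \<theta>_def)
  have \<theta>_C: "\<theta> \<in> C_Rplus" using cont_\<theta> by (simp add: C_Rplus_def \<theta>_def)
  have conv_\<theta>: "volterra_conv k \<theta> \<tau> = volterra_conv k \<theta>0 \<tau>" for k \<tau>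
    unfolding volterra_conv_def by (rule integral_cong) (simp add: \<theta>_def)
  have "\<exists>C. \<forall>t\<in>{0..}. volterra_conv_Rplus g \<theta> t - h t = C"
  proof (rule has_field_derivative_zero_constant)
    fix \<tau> :: real assume \<tau>: "\<tau> \<in> {0..}"
    have "\<theta> \<tau> * g 0 + volterra_conv g' \<theta> \<tau> = h' \<tau>"
      using \<theta>0[of \<tau>] \<tau> g0 by (simp add: \<theta>_def conv_\<theta> volterra_conv_divide_kernel field_simps)
    then show "((\<lambda>t. volterra_conv_Rplus g \<theta> t - h t) has_real_derivative 0) (at \<tau> within {0..})"
      using DERIV_diff[OF volterra_conv_Rplus_has_real_derivative[OF cont_\<theta>] h, of \<tau>] \<tau> by simp
  qed simp
  then obtain C where C: "\<And>t. t \<ge> 0 \<Longrightarrow> volterra_conv_Rplus g \<theta> t - h t = C"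
    by auto
  have "C = 0"
    using C[of 0] by (simp add: volterra_conv_Rplus_def volterra_conv_def h0)
  have "h = volterra_conv_Rplus g \<theta>"
  proof
    fix t show "h t = volterra_conv_Rplus g \<theta> t"
      using h_neg[of t] C[of t] \<open>C = 0\<close> by (cases "t \<ge> 0") (simp_all add: volterra_conv_Rplus_def)
  qed
  then show "h \<in> volterra_conv_Rplus g ` C_Rplus" by (rule rev_image_eqI[OF \<theta>_C])
qed

lemma bij_betw_volterra_conv_Rplus: "bij_betw (volterra_conv_Rplus g) C_Rplus C1_Rplus_0"
  using volterra_conv_Rplus_in_C1_Rplus_0 inj_on_volterra_conv_Rplus volterra_conv_Rplus_surj
  by (auto simp: bij_betw_def)

end

lemma has_vector_derivative_inner_const:
  fixes F :: "real \<Rightarrow> 'a::real_inner"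
  assumes "(F has_vector_derivative v) (at t within S)"
  shows "((\<lambda>t. F t \<bullet> c) has_real_derivative v \<bullet> c) (at t within S)"
proof -
  have "((\<lambda>t. F t \<bullet> c) has_derivative (\<lambda>h. (h *\<^sub>R v) \<bullet> c)) (at t within S)"
    using assms unfolding has_vector_derivative_def by (rule has_derivative_inner_left)
  then show ?thesis by (simp add: has_field_derivative_def mult.commute[of _ "v \<bullet> c"])
qed

lemma Rvec_zero [simp]: "Rvec \<alpha> \<beta> 0 = 0"
  by (simp add: Rvec_def quad_def vec_eq_iff)

theorem mainTheorem5:
  fixes a :: "'y \<Rightarrow> real ^ ('n::{finite,wellorder}) ^ ('n::{finite,wellorder})"
    and \<alpha> :: "'y \<Rightarrow> ('n::{finite,wellorder}) \<Rightarrow> real ^ ('n::{finite,wellorder}) ^ ('n::{finite,wellorder})"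
    and b :: "'y \<Rightarrow> real ^ ('n::{finite,wellorder})"
    and \<beta> :: "'y \<Rightarrow> ('n::{finite,wellorder}) \<Rightarrow> real ^ ('n::{finite,wellorder})"
    and lam :: "real ^ ('n::{finite,wellorder})"
    and y :: 'y
    and \<Phi> :: "real \<Rightarrow> real" and \<Psi> :: "real \<Rightarrow> real ^ ('n::{finite,wellorder})"
  assumes "\<forall>y. sym_psd (a y) \<and> (\<forall>i. sym_psd (\<alpha> y i))"
    and "lam \<bullet> e1 \<noteq> 0"
    and "riccati_solution (a y) (b y) (\<alpha> y) (\<beta> y) lam \<Phi> \<Psi>"
  shows "volterra_op \<Psi> ` C_Rplus \<subseteq> C1_Rplus_0 \<and> bij_betw (volterra_op \<Psi>) C_Rplus C1_Rplus_0"
proof -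
  obtain D where D0: "D 0 = \<Psi>"
    and D: "\<And>k t. t \<ge> 0 \<Longrightarrow> (D k has_vector_derivative D (Suc k) t) (at t within {0..})"
    using assms(3) unfolding riccati_solution_def smooth_Rplus_def by blast
  have "(\<Psi> has_vector_derivative - lam) (at 0 within {0..})"
    using assms(3) unfolding riccati_solution_def by auto
  then have "D 1 0 = - lam"
    using D[of 0 0] D0 by (intro vector_derivative_unique_within[OF at_within_atLeast_neq_bot]) auto
  define g where "g k t = D k t \<bullet> e1" for k t
  have g: "(g k has_real_derivative g (Suc k) t) (at t within {0..})" if "t \<ge> 0" for k t
    unfolding g_def by (rule has_vector_derivative_inner_const[OF D[OF that]])
  have "volterra_op \<Psi> = volterra_conv_Rplus (g 1)"
  proof (intro ext)
    fix \<theta> \<tau>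
    have "vector_derivative \<Psi> (at t within {0..}) = D 1 t" if "t \<ge> 0" for t
      using D[OF that, of 0] D0 by (intro vector_derivative_within at_within_atLeast_neq_bot that) auto
    then show "volterra_op \<Psi> \<theta> \<tau> = volterra_conv_Rplus (g 1) \<theta> \<tau>"
      unfolding volterra_op_def volterra_conv_Rplus_def volterra_conv_def g_def
      by (auto intro!: integral_cong)
  qed
  moreover have "bij_betw (volterra_conv_Rplus (g 1)) C_Rplus C1_Rplus_0"
  proof (rule bij_betw_volterra_conv_Rplus)
    show "continuous_on {0..} (g 3)"
      using g[of _ 3] by (intro DERIV_continuous_on) auto
    show "g 1 0 \<noteq> 0"
      using \<open>D 1 0 = - lam\<close> assms(2) by (simp add: g_def)
  qed (use g[of _ 1] g[of _ 2] in \<open>simp_all add: numeral_eq_Suc\<close>)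
  ultimately show ?thesis
    by (simp add: bij_betw_imp_surj_on)
qed

end
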